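(* Let $X$ be a non-negative random variable and $C>0$ a constant (which may depend on $X$). Then the following statements are equivalent: (a) For all $s\in(0,1)$, $\mathbb{E}[X^{1+s}]\le \frac{C}{1-s}$. (b) $X$ is integrable and its Laplace transform $L(t):=\mathbb{E}[\mathrm{e}^{-tX}]$ satisfies, for all $s\in(0,1)$, $$\int_0^\infty \frac{\mathbb{E}[X]+L'(u)}{u^{1+s}}\,\mathrm{d}u\le C\,\frac{\Gamma(1-s)}{s(1-s)}.$$ (c) The characteristic function $\varphi(t):=\mathbb{E}[\mathrm{e}^{itX}]$ satisfies, for all $s\in(0,1)$, $$\int_0^\infty \frac{1-\mathrm{Re}(\varphi(u))}{u^{2+s}}\,\mathrm{d}u\le C\,\frac{\sin(\pi s/2)\,\Gamma(1-s)}{s(s+1)(1-s)}.$$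
   Context: $\Gamma$ denotes the Gamma function. *)

theory Defs
  imports "HOL-Probability.Probability"
begin

end

theory Submission
  imports Defs "HOL-Real_Asymp.Real_Asymp"
begin

(* For y >= 0 and 0 < s < 1 the substitution u = v / y gives
     int_0^oo y (1 - exp (- u y)) / u^(1+s) du = Gamma (1 - s) / s * y^(1+s),
     int_0^oo (1 - cos (u y)) / u^(2+s) du = Gamma (1 - s) sin (pi s / 2) / (s (s + 1)) * y^(1+s).
   As E X + L'(u) = E [X (1 - exp (- u X))] and 1 - Re phi(u) = E [1 - cos (u X)], Tonelli's theorem
   turns the integrals in (b) and (c) into these positive constants times E [X^(1+s)], so (b) and (c)
   are (a) multiplied through by them; (a) with s = 1/2 also makes X integrable.  The constants are
   computed from w^(-a) = Gamma a^(-1) int_0^oo t^(a-1) exp (- t w) dt, which reduces them to the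
   integrals int_0^oo t^(a-1) / (1 + t) dt = Gamma a Gamma (1 - a) and int_0^oo t^s / (1 + t^2) dt
   and to the reflection formula. *)

section \<open>Nonnegative integrals over the positive half-line\<close>

lemma nn_integral_Ioi_cmult:
  fixes f :: "real \<Rightarrow> real"
  assumes "f \<in> borel_measurable borel" "c \<ge> 0"
  shows "(\<integral>\<^sup>+x\<in>{0<..}. ennreal (c * f x) \<partial>lborel) = ennreal c * (\<integral>\<^sup>+x\<in>{0<..}. ennreal (f x) \<partial>lborel)"
  using assms by (subst nn_integral_cmult[symmetric]) (auto simp: ennreal_mult' mult.assoc)

lemma nn_integral_Ioi_swap:
  fixes f :: "real \<Rightarrow> real \<Rightarrow> ennreal"
  assumes "case_prod f \<in> borel_measurable (lborel \<Otimes>\<^sub>M lborel)"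
  shows "(\<integral>\<^sup>+x\<in>{0<..}. (\<integral>\<^sup>+y\<in>{0<..}. f x y \<partial>lborel) \<partial>lborel)
       = (\<integral>\<^sup>+y\<in>{0<..}. (\<integral>\<^sup>+x\<in>{0<..}. f x y \<partial>lborel) \<partial>lborel)"
proof -
  have [measurable]: "(\<lambda>(x, y). f x y * indicator {0<..} y * indicator {0<..} x) \<in> borel_measurable (lborel \<Otimes>\<^sub>M lborel)"
    using assms by measurable
  have "(\<integral>\<^sup>+x\<in>{0<..}. (\<integral>\<^sup>+y\<in>{0<..}. f x y \<partial>lborel) \<partial>lborel)
      = (\<integral>\<^sup>+x. (\<integral>\<^sup>+y. f x y * indicator {0<..} y * indicator {0<..} x \<partial>lborel) \<partial>lborel)"
    using assms by (subst nn_integral_multc) (auto simp: measurable_Pair2)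
  also have "\<dots> = (\<integral>\<^sup>+y. (\<integral>\<^sup>+x. f x y * indicator {0<..} y * indicator {0<..} x \<partial>lborel) \<partial>lborel)"
    by (rule lborel_pair.Fubini') measurable
  also have "\<dots> = (\<integral>\<^sup>+y\<in>{0<..}. (\<integral>\<^sup>+x\<in>{0<..}. f x y \<partial>lborel) \<partial>lborel)"
    by (intro nn_integral_cong) (auto simp: indicator_def)
  finally show ?thesis .
qed

lemma nn_integral_Ioi_scale_powr:
  fixes f :: "real \<Rightarrow> real"
  assumes [measurable]: "f \<in> borel_measurable borel" and c: "c > 0"
  shows "(\<integral>\<^sup>+u\<in>{0<..}. ennreal (c powr p * f (c * u)) \<partial>lborel)
           = ennreal (c powr (p - 1)) * (\<integral>\<^sup>+v\<in>{0<..}. ennreal (f v) \<partial>lborel)"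
proof -
  have "(\<integral>\<^sup>+v\<in>{0<..}. ennreal (f v) \<partial>lborel)
      = ennreal c * (\<integral>\<^sup>+u. ennreal (f (0 + c * u)) * indicator {0<..} (0 + c * u) \<partial>lborel)"
    using c by (subst nn_integral_real_affine[where c=c and t=0]) auto
  also have "\<dots> = ennreal c * (\<integral>\<^sup>+u\<in>{0<..}. ennreal (f (c * u)) \<partial>lborel)"
    using c by (simp add: indicator_def zero_less_mult_iff)
  finally have "ennreal (c powr (p - 1)) * (\<integral>\<^sup>+v\<in>{0<..}. ennreal (f v) \<partial>lborel)
      = ennreal (c powr (p - 1) * c) * (\<integral>\<^sup>+u\<in>{0<..}. ennreal (f (c * u)) \<partial>lborel)"
    using c by (simp add: ennreal_mult mult.assoc)
  also have "c powr (p - 1) * c = c powr p"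
    using c by (simp add: powr_diff)
  also have "ennreal (c powr p) * (\<integral>\<^sup>+u\<in>{0<..}. ennreal (f (c * u)) \<partial>lborel)
      = (\<integral>\<^sup>+u\<in>{0<..}. ennreal (c powr p * f (c * u)) \<partial>lborel)"
    by (subst nn_integral_cmult[symmetric]) (auto simp: ennreal_mult' mult.assoc)
  finally show ?thesis ..
qed

lemma nn_integral_Ioi_FTC:
  fixes f F :: "real \<Rightarrow> real"
  assumes "f \<in> borel_measurable borel"
    and "\<And>x. x \<ge> 0 \<Longrightarrow> (F has_real_derivative f x) (at x)" and "\<And>x. x \<ge> 0 \<Longrightarrow> 0 \<le> f x"
    and "(F \<longlongrightarrow> T) at_top"
  shows "(\<integral>\<^sup>+x\<in>{0<..}. ennreal (f x) \<partial>lborel) = ennreal (T - F 0)"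
proof -
  have "(\<integral>\<^sup>+x\<in>{0<..}. ennreal (f x) \<partial>lborel) = (\<integral>\<^sup>+x. ennreal (f x) * indicator {0..} x \<partial>lborel)"
    by (intro nn_integral_cong_AE eventually_mono[OF AE_lborel_singleton[of 0]])
       (auto simp: indicator_def)
  also have "\<dots> = ennreal (T - F 0)"
    by (rule nn_integral_FTC_atLeast[OF assms])
  finally show ?thesis .
qed

lemma nn_integral_Ioi_eq_ennreal_iff:
  fixes f :: "real \<Rightarrow> real"
  assumes "f \<in> borel_measurable borel" "\<And>x. x > 0 \<Longrightarrow> 0 \<le> f x" "K \<ge> 0"
  shows "(\<integral>\<^sup>+x\<in>{0<..}. ennreal (f x) \<partial>lborel) = ennreal K
           \<longleftrightarrow> set_integrable lborel {0<..} f \<and> (LBINT x:{0<..}. f x) = K"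
proof -
  have "(\<integral>\<^sup>+x\<in>{0<..}. ennreal (f x) \<partial>lborel) = (\<integral>\<^sup>+x. ennreal (indicator {0<..} x *\<^sub>R f x) \<partial>lborel)"
    by (intro nn_integral_cong) (auto simp: indicator_def)
  moreover have "(\<integral>\<^sup>+x. ennreal (indicator {0<..} x *\<^sub>R f x) \<partial>lborel) = ennreal K
      \<longleftrightarrow> integrable lborel (\<lambda>x. indicator {0<..} x *\<^sub>R f x) \<and> (LBINT x. indicator {0<..} x *\<^sub>R f x) = K"
    using assms by (intro nn_integral_eq_integrable) (auto simp: indicator_def)
  ultimately show ?thesis
    unfolding set_integrable_def set_lebesgue_integral_def by simp
qed

lemma nn_integral_Ioi_substitution:
  fixes f g g' :: "real \<Rightarrow> real"
  assumes [measurable]: "f \<in> borel_measurable borel" "(\<lambda>x. f (g x) * g' x) \<in> borel_measurable borel"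
    and deriv: "\<And>x. x > 0 \<Longrightarrow> (g has_real_derivative g' x) (at x)"
    and cont: "\<And>x. x > 0 \<Longrightarrow> isCont f (g x)" "\<And>x. x > 0 \<Longrightarrow> isCont g' x"
    and nonneg: "\<And>y. y > 0 \<Longrightarrow> 0 \<le> f y" "\<And>x. x \<ge> 0 \<Longrightarrow> 0 \<le> g' x" "\<And>x. x > 0 \<Longrightarrow> g x > 0"
      \<comment> \<open>\<open>g' 0 \<ge> 0\<close> is a side condition of \<open>interval_integral_substitution_nonneg\<close>\<close>
    and lim: "(g \<longlongrightarrow> 0) (at_right 0)" "filterlim g at_top at_top"
    and K: "(\<integral>\<^sup>+x\<in>{0<..}. ennreal (f (g x) * g' x) \<partial>lborel) = ennreal K" "K \<ge> 0"
  shows "(\<integral>\<^sup>+y\<in>{0<..}. ennreal (f y) \<partial>lborel) = ennreal K"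
proof -
  have "set_integrable lborel {0<..} (\<lambda>x. f (g x) * g' x) \<and> (LBINT x:{0<..}. f (g x) * g' x) = K"
    using nn_integral_Ioi_eq_ennreal_iff[of "\<lambda>x. f (g x) * g' x" K] K nonneg by auto
  moreover have "((ereal \<circ> g \<circ> real_of_ereal) \<longlongrightarrow> ereal 0) (at_right (ereal 0))"
    using lim(1) by (simp add: ereal_tendsto_simps)
  moreover have "((ereal \<circ> g \<circ> real_of_ereal) \<longlongrightarrow> \<infinity>) (at_left \<infinity>)"
    using lim(2) ereal_tendsto_simps2(2)[of g at_top]
    by (simp add: at_left_PInf filterlim_filtermap o_def)
  ultimately have "set_integrable lborel (einterval 0 \<infinity>) f" "(LBINT y=0..\<infinity>. f y) = K"
    using interval_integral_substitution_nonneg[of 0 \<infinity> g g' f "ereal 0" \<infinity>] deriv cont nonneg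
    by (auto simp: zero_ereal_def interval_integral_to_infinity_eq)
  then show ?thesis
    using nonneg K by (subst nn_integral_Ioi_eq_ennreal_iff) (auto simp: zero_ereal_def interval_integral_to_infinity_eq)
qed

section \<open>Gamma and Beta integrals\<close>

lemma nn_integral_Ioi_powr_exp:
  assumes "a > (0::real)" "r > 0"
  shows "(\<integral>\<^sup>+y\<in>{0<..}. ennreal (y powr (a - 1) * exp (- (r * y))) \<partial>lborel) = ennreal (Gamma a / r powr a)"
proof -
  have Gamma: "(\<integral>\<^sup>+y\<in>{0<..}. ennreal (y powr (a - 1) * exp (- y)) \<partial>lborel) = ennreal (Gamma a)"
    unfolding Gamma_conv_nn_integral_real[OF assms(1)]
    by (intro nn_integral_cong_AE eventually_mono[OF AE_lborel_singleton[of 0]])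
       (auto simp: indicator_def exp_minus field_simps)
  have "(\<integral>\<^sup>+y\<in>{0<..}. ennreal (y powr (a - 1) * exp (- (r * y))) \<partial>lborel)
      = (\<integral>\<^sup>+y\<in>{0<..}. ennreal (r powr (1 - a) * ((r * y) powr (a - 1) * exp (- (r * y)))) \<partial>lborel)"
    using assms by (intro nn_integral_cong) (auto simp: indicator_def powr_mult powr_diff field_simps)
  also have "\<dots> = ennreal (r powr (1 - a - 1)) * ennreal (Gamma a)"
    using assms by (subst nn_integral_Ioi_scale_powr) (simp_all add: Gamma)
  also have "\<dots> = ennreal (Gamma a / r powr a)"
    using assms by (simp add: ennreal_mult'[symmetric] powr_minus divide_inverse mult.commute)
  finally show ?thesis .
qed

lemma nn_integral_Ioi_powr_div_one_plus:
  assumes "0 < a" "a < 1"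
  shows "(\<integral>\<^sup>+y\<in>{0<..}. ennreal (y powr (a - 1) / (1 + y)) \<partial>lborel) = ennreal (Gamma a * Gamma (1 - a))"
proof -
  have reciprocal: "ennreal (y powr (a - 1) / (1 + y))
      = (\<integral>\<^sup>+r\<in>{0<..}. ennreal (exp (- r) * (y powr (a - 1) * exp (- (r * y)))) \<partial>lborel)" if "y > 0" for y
  proof -
    have "(\<integral>\<^sup>+r\<in>{0<..}. ennreal (exp (- ((1 + y) * r))) \<partial>lborel)
        = (\<integral>\<^sup>+r\<in>{0<..}. ennreal (r powr (1 - 1) * exp (- ((1 + y) * r))) \<partial>lborel)"
      by (intro nn_integral_cong) (auto simp: indicator_def)
    also have "\<dots> = ennreal (1 / (1 + y))"
      using nn_integral_Ioi_powr_exp[of 1 "1 + y"] that by simp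
    finally have "(\<integral>\<^sup>+r\<in>{0<..}. ennreal (y powr (a - 1) * exp (- ((1 + y) * r))) \<partial>lborel)
        = ennreal (y powr (a - 1) / (1 + y))"
      by (simp add: nn_integral_Ioi_cmult ennreal_mult'[symmetric])
    moreover have "exp (- r) * (y powr (a - 1) * exp (- (r * y))) = y powr (a - 1) * exp (- ((1 + y) * r))" for r
      by (simp add: algebra_simps flip: exp_add)
    ultimately show ?thesis
      by (simp only:)
  qed
  have "(\<integral>\<^sup>+y\<in>{0<..}. ennreal (y powr (a - 1) / (1 + y)) \<partial>lborel)
      = (\<integral>\<^sup>+y\<in>{0<..}. (\<integral>\<^sup>+r\<in>{0<..}. ennreal (exp (- r) * (y powr (a - 1) * exp (- (r * y)))) \<partial>lborel) \<partial>lborel)"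
    by (intro nn_integral_cong) (auto simp: reciprocal indicator_def)
  also have "\<dots> = (\<integral>\<^sup>+r\<in>{0<..}. (\<integral>\<^sup>+y\<in>{0<..}. ennreal (exp (- r) * (y powr (a - 1) * exp (- (r * y)))) \<partial>lborel) \<partial>lborel)"
    by (rule nn_integral_Ioi_swap) measurable
  also have "\<dots> = (\<integral>\<^sup>+r\<in>{0<..}. ennreal (Gamma a * (r powr ((1 - a) - 1) * exp (- (1 * r)))) \<partial>lborel)"
  proof (intro nn_integral_cong)
    fix r :: real
    have "(\<integral>\<^sup>+y\<in>{0<..}. ennreal (exp (- r) * (y powr (a - 1) * exp (- (r * y)))) \<partial>lborel)
        = ennreal (exp (- r) * (Gamma a / r powr a))" if "r > 0"
      using that assms by (simp add: nn_integral_Ioi_cmult nn_integral_Ioi_powr_exp ennreal_mult'[symmetric])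
    then show "(\<integral>\<^sup>+y\<in>{0<..}. ennreal (exp (- r) * (y powr (a - 1) * exp (- (r * y)))) \<partial>lborel) * indicator {0<..} r
        = ennreal (Gamma a * (r powr ((1 - a) - 1) * exp (- (1 * r)))) * indicator {0<..} r"
      by (auto simp: indicator_def powr_minus divide_inverse mult_ac)
  qed
  also have "\<dots> = ennreal (Gamma a * (Gamma (1 - a) / 1 powr (1 - a)))"
    using assms nn_integral_Ioi_powr_exp[of "1 - a" 1]
    by (subst nn_integral_Ioi_cmult) (auto simp flip: ennreal_mult')
  also have "\<dots> = ennreal (Gamma a * Gamma (1 - a))"
    by simp
  finally show ?thesis .
qed

lemma nn_integral_Ioi_powr_div_one_plus_square:
  assumes "-1 < s" "s < 1"
  shows "(\<integral>\<^sup>+t\<in>{0<..}. ennreal (t powr s / (1 + t\<^sup>2)) \<partial>lborel)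
           = ennreal (Gamma ((1 + s) / 2) * Gamma ((1 - s) / 2) / 2)"
proof (rule nn_integral_Ioi_substitution[where g = sqrt and g' = "\<lambda>x. 1 / (2 * sqrt x)"])
  have "sqrt x powr s / (1 + (sqrt x)\<^sup>2) * (1 / (2 * sqrt x)) = 1 / 2 * (x powr ((1 + s) / 2 - 1) / (1 + x))"
    if "x > 0" for x
  proof -
    have "sqrt x powr s / (1 + (sqrt x)\<^sup>2) * (1 / (2 * sqrt x)) = 1 / 2 * (sqrt x powr s * (1 / sqrt x) / (1 + x))"
      using that by simp
    also have "sqrt x powr s * (1 / sqrt x) = (x powr (1 / 2)) powr s / x powr (1 / 2)"
      using that by (simp add: powr_half_sqrt)
    also have "\<dots> = x powr (s / 2 - 1 / 2)"
      by (simp add: powr_powr powr_diff mult.commute)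
    also have "s / 2 - 1 / 2 = (1 + s) / 2 - 1"
      by simp
    finally show ?thesis .
  qed
  then have "(\<integral>\<^sup>+x\<in>{0<..}. ennreal (sqrt x powr s / (1 + (sqrt x)\<^sup>2) * (1 / (2 * sqrt x))) \<partial>lborel)
      = (\<integral>\<^sup>+x\<in>{0<..}. ennreal (1 / 2 * (x powr ((1 + s) / 2 - 1) / (1 + x))) \<partial>lborel)"
    by (intro nn_integral_cong) (auto simp: indicator_def)
  also have "\<dots> = ennreal (1 / 2 * (Gamma ((1 + s) / 2) * Gamma (1 - (1 + s) / 2)))"
    using assms nn_integral_Ioi_powr_div_one_plus[of "(1 + s) / 2"]
    by (subst nn_integral_Ioi_cmult) (auto simp: divide_ennreal[symmetric] divide_ennreal_def mult.commute)
  finally show "(\<integral>\<^sup>+x\<in>{0<..}. ennreal (sqrt x powr s / (1 + (sqrt x)\<^sup>2) * (1 / (2 * sqrt x))) \<partial>lborel)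
      = ennreal (Gamma ((1 + s) / 2) * Gamma ((1 - s) / 2) / 2)"
    by (simp add: field_simps)
  show "(sqrt \<longlongrightarrow> 0) (at_right 0)"
    using tendsto_real_sqrt[OF tendsto_ident_at[of "0::real" "{0<..}"]] by simp
  show "filterlim sqrt at_top at_top"
    by real_asymp
  show "(\<lambda>t. t powr s / (1 + t\<^sup>2)) \<in> borel_measurable borel"
    "(\<lambda>x. sqrt x powr s / (1 + (sqrt x)\<^sup>2) * (1 / (2 * sqrt x))) \<in> borel_measurable borel"
    by measurable
  show "(sqrt has_real_derivative 1 / (2 * sqrt x)) (at x)" if "x > 0" for x
    using DERIV_real_sqrt[OF that] by (simp add: field_simps)
  show "isCont (\<lambda>t. t powr s / (1 + t\<^sup>2)) (sqrt x)" "isCont (\<lambda>x. 1 / (2 * sqrt x)) x" if "x > 0" for x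
    using that by (auto intro!: continuous_intros simp: add_pos_nonneg)
qed (use assms in \<open>auto intro!: divide_nonneg_nonneg simp: add_pos_nonneg\<close>)

lemma Gamma_reflection_real: "Gamma x * Gamma (1 - x) = pi / sin (pi * x)"
proof -
  have "complex_of_real (Gamma x * Gamma (1 - x)) = Gamma (of_real x) * Gamma (1 - of_real x)"
    by (simp add: Gamma_complex_of_real[symmetric])
  also have "\<dots> = of_real pi / sin (of_real pi * of_real x)"
    by (rule Gamma_reflection_complex)
  also have "\<dots> = complex_of_real (pi / sin (pi * x))"
    by (simp add: sin_of_real[symmetric])
  finally show ?thesis
    by (simp only: of_real_eq_iff)
qed

lemma Gamma_half_reflection_div_Gamma:
  assumes "0 < s" "s < 1"
  shows "Gamma ((1 + s) / 2) * Gamma ((1 - s) / 2) / 2 / Gamma (2 + s) = Gamma (1 - s) * sin (pi * s / 2) / (s * (s + 1))"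
proof -
  have Gamma_pos: "Gamma s > 0"
    using assms by simp
  have angle: "0 < pi * s / 2" "pi * s / 2 < pi / 2"
    using assms by auto
  have cos_pos: "cos (pi * s / 2) > 0"
    using angle by (intro cos_gt_zero_pi) linarith+
  have sin_pos: "sin (pi * s / 2) > 0"
    using angle by (intro sin_gt_zero) linarith+
  have "Gamma ((1 + s) / 2) * Gamma ((1 - s) / 2) = pi / sin (pi * ((1 + s) / 2))"
    using Gamma_reflection_real[of "(1 + s) / 2"] by (simp add: field_simps)
  also have "pi * ((1 + s) / 2) = pi / 2 + pi * s / 2"
    by (simp add: field_simps)
  also have "sin (pi / 2 + pi * s / 2) = cos (pi * s / 2)"
    by (simp add: sin_add)
  finally have half: "Gamma ((1 + s) / 2) * Gamma ((1 - s) / 2) = pi / cos (pi * s / 2)" .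
  have "s \<notin> \<int>\<^sub>\<le>\<^sub>0" "1 + s \<notin> \<int>\<^sub>\<le>\<^sub>0"
    using assms by (auto dest: nonpos_Ints_nonpos)
  then have Gamma_2: "Gamma (2 + s) = (1 + s) * s * Gamma s"
    using Gamma_plus1[of "1 + s"] Gamma_plus1[of s] by (simp add: add_ac)
  have Gamma_1: "Gamma (1 - s) = pi / (2 * sin (pi * s / 2) * cos (pi * s / 2) * Gamma s)"
    using Gamma_reflection_real[of s] sin_double[of "pi * s / 2"] Gamma_pos cos_pos sin_pos
    by (simp add: field_simps)
  show ?thesis
    unfolding half Gamma_1 Gamma_2 using cos_pos sin_pos Gamma_pos assms by (simp add: field_simps)
qed

section \<open>Integrals of 1 - exp (- w) and 1 - cos w against powers of w\<close>

lemma nn_integral_Ioi_one_minus_exp_mult_exp: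
  assumes "t > (0::real)"
  shows "(\<integral>\<^sup>+w\<in>{0<..}. ennreal ((1 - exp (- w)) * exp (- (t * w))) \<partial>lborel) = ennreal (1 / (t * (1 + t)))"
proof -
  define F where "F w = exp (- ((1 + t) * w)) / (1 + t) - exp (- (t * w)) / t" for w
  have "(\<integral>\<^sup>+w\<in>{0<..}. ennreal ((1 - exp (- w)) * exp (- (t * w))) \<partial>lborel) = ennreal (0 - F 0)"
  proof (rule nn_integral_Ioi_FTC)
    show "(F has_real_derivative (1 - exp (- w)) * exp (- (t * w))) (at w)" for w
    proof -
      have exp_split: "exp (- ((1 + t) * w)) = exp (- w) * exp (- (t * w))"
        by (simp add: algebra_simps flip: exp_add)
      have "(F has_real_derivative
          exp (- ((1 + t) * w)) * (- (1 + t)) / (1 + t) - exp (- (t * w)) * (- t) / t) (at w)"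
        unfolding F_def using assms by (intro DERIV_cdivide derivative_eq_intros) auto
      then show ?thesis
        by (rule DERIV_cong) (use assms exp_split in \<open>simp add: field_simps\<close>)
    qed
    have "((\<lambda>w. exp (- ((1 + t) * w))) \<longlongrightarrow> 0) at_top" "((\<lambda>w. exp (- (t * w))) \<longlongrightarrow> 0) at_top"
      using assms by real_asymp+
    then have "(F \<longlongrightarrow> 0 / (1 + t) - 0 / t) at_top"
      unfolding F_def using assms by (intro tendsto_intros) auto
    then show "(F \<longlongrightarrow> 0) at_top"
      by simp
  qed auto
  also have "0 - F 0 = 1 / (t * (1 + t))"
    unfolding F_def using assms by (simp add: field_simps)
  finally show ?thesis .
qed

lemma nn_integral_Ioi_one_minus_cos_mult_exp:
  assumes "t > (0::real)"
  shows "(\<integral>\<^sup>+w\<in>{0<..}. ennreal ((1 - cos w) * exp (- (t * w))) \<partial>lborel) = ennreal (1 / (t * (1 + t\<^sup>2)))"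
proof -
  have pos: "1 + t\<^sup>2 > 0"
    by (simp add: add_pos_nonneg)
  define F where "F w = exp (- (t * w)) * (t * cos w - sin w) / (1 + t\<^sup>2) - exp (- (t * w)) / t" for w
  have "(\<integral>\<^sup>+w\<in>{0<..}. ennreal ((1 - cos w) * exp (- (t * w))) \<partial>lborel) = ennreal (0 - F 0)"
  proof (rule nn_integral_Ioi_FTC)
    show "(F has_real_derivative (1 - cos w) * exp (- (t * w))) (at w)" for w
    proof -
      have "(F has_real_derivative
          (exp (- (t * w)) * (- t) * (t * cos w - sin w) + exp (- (t * w)) * (- (t * sin w) - cos w))
            / (1 + t\<^sup>2) - exp (- (t * w)) * (- t) / t) (at w)"
        unfolding F_def using assms pos by (intro DERIV_cdivide derivative_eq_intros) auto
      then show ?thesis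
        by (rule DERIV_cong) (use assms pos in \<open>simp add: field_simps power2_eq_square\<close>)
    qed
    have exp0: "((\<lambda>w. exp (- (t * w))) \<longlongrightarrow> 0) at_top"
      using assms by real_asymp
    have "\<bar>t * cos w - sin w\<bar> \<le> t + 1" for w
    proof -
      have "\<bar>t * cos w\<bar> \<le> t"
        using assms by (simp add: abs_mult mult_left_le)
      then show ?thesis
        using abs_triangle_ineq4[of "t * cos w" "sin w"] abs_sin_le_one[of w] by linarith
    qed
    then have "((\<lambda>w. exp (- (t * w)) * (t * cos w - sin w)) \<longlongrightarrow> 0) at_top"
      by (intro lim_null_mult_right_bounded[OF exp0, of _ "t + 1"]) auto
    then have "(F \<longlongrightarrow> 0 / (1 + t\<^sup>2) - 0 / t) at_top"
      unfolding F_def using exp0 assms pos by (intro tendsto_intros) auto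
    then show "(F \<longlongrightarrow> 0) at_top"
      by simp
  qed auto
  also have "0 - F 0 = 1 / (t * (1 + t\<^sup>2))"
    unfolding F_def using assms pos by (simp add: field_simps power2_eq_square)
  finally show ?thesis .
qed

lemma nn_integral_Ioi_div_powr_Laplace:
  fixes g :: "real \<Rightarrow> real"
  assumes a: "a > 0" and [measurable]: "g \<in> borel_measurable borel" and g: "\<And>w. w > 0 \<Longrightarrow> g w \<ge> 0"
  shows "(\<integral>\<^sup>+w\<in>{0<..}. ennreal (g w / w powr a) \<partial>lborel)
       = (\<integral>\<^sup>+t\<in>{0<..}. ennreal (t powr (a - 1) / Gamma a) * (\<integral>\<^sup>+w\<in>{0<..}. ennreal (g w * exp (- (t * w))) \<partial>lborel) \<partial>lborel)"
proof -
  have Gamma: "Gamma a > 0"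
    using a by simp
  have kernel: "ennreal (g w / w powr a)
      = (\<integral>\<^sup>+t\<in>{0<..}. ennreal (t powr (a - 1) / Gamma a * (g w * exp (- (t * w)))) \<partial>lborel)" if "w > 0" for w
  proof -
    have "(\<integral>\<^sup>+t\<in>{0<..}. ennreal (t powr (a - 1) / Gamma a * (g w * exp (- (t * w)))) \<partial>lborel)
        = (\<integral>\<^sup>+t\<in>{0<..}. ennreal (g w / Gamma a * (t powr (a - 1) * exp (- (w * t)))) \<partial>lborel)"
      by (intro nn_integral_cong) (simp add: mult_ac)
    also have "\<dots> = ennreal (g w / Gamma a * (Gamma a / w powr a))"
      using that a g[OF that] Gamma
      by (subst nn_integral_Ioi_cmult) (auto simp: nn_integral_Ioi_powr_exp ennreal_mult'[symmetric])
    finally show ?thesis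
      using Gamma by simp
  qed
  have "(\<integral>\<^sup>+w\<in>{0<..}. ennreal (g w / w powr a) \<partial>lborel)
      = (\<integral>\<^sup>+w\<in>{0<..}. (\<integral>\<^sup>+t\<in>{0<..}. ennreal (t powr (a - 1) / Gamma a * (g w * exp (- (t * w)))) \<partial>lborel) \<partial>lborel)"
    by (intro nn_integral_cong) (auto simp: kernel indicator_def)
  also have "\<dots> = (\<integral>\<^sup>+t\<in>{0<..}. (\<integral>\<^sup>+w\<in>{0<..}. ennreal (t powr (a - 1) / Gamma a * (g w * exp (- (t * w)))) \<partial>lborel) \<partial>lborel)"
    by (rule nn_integral_Ioi_swap) measurable
  also have "\<dots> = (\<integral>\<^sup>+t\<in>{0<..}. ennreal (t powr (a - 1) / Gamma a) * (\<integral>\<^sup>+w\<in>{0<..}. ennreal (g w * exp (- (t * w))) \<partial>lborel) \<partial>lborel)"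
    by (intro nn_integral_cong, subst nn_integral_Ioi_cmult) (use Gamma in auto)
  finally show ?thesis .
qed

lemma nn_integral_Ioi_one_minus_exp_div_powr:
  assumes "0 < s" "s < 1"
  shows "(\<integral>\<^sup>+w\<in>{0<..}. ennreal ((1 - exp (- w)) / w powr (1 + s)) \<partial>lborel) = ennreal (Gamma (1 - s) / s)"
proof -
  have Gamma: "Gamma (1 + s) > 0"
    using assms by simp
  have "(\<integral>\<^sup>+w\<in>{0<..}. ennreal ((1 - exp (- w)) / w powr (1 + s)) \<partial>lborel)
      = (\<integral>\<^sup>+t\<in>{0<..}. ennreal (t powr (1 + s - 1) / Gamma (1 + s))
           * (\<integral>\<^sup>+w\<in>{0<..}. ennreal ((1 - exp (- w)) * exp (- (t * w))) \<partial>lborel) \<partial>lborel)"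
    using assms by (intro nn_integral_Ioi_div_powr_Laplace) auto
  also have "\<dots> = (\<integral>\<^sup>+t\<in>{0<..}. ennreal (1 / Gamma (1 + s) * (t powr (s - 1) / (1 + t))) \<partial>lborel)"
  proof (intro nn_integral_cong)
    fix t :: real
    show "ennreal (t powr (1 + s - 1) / Gamma (1 + s))
          * (\<integral>\<^sup>+w\<in>{0<..}. ennreal ((1 - exp (- w)) * exp (- (t * w))) \<partial>lborel) * indicator {0<..} t
        = ennreal (1 / Gamma (1 + s) * (t powr (s - 1) / (1 + t))) * indicator {0<..} t"
    proof (cases "t > 0")
      case True
      have "t powr (1 + s - 1) = t * t powr (s - 1)"
        using True by (simp add: powr_diff)
      then have "ennreal (t powr (1 + s - 1) / Gamma (1 + s)) * ennreal (1 / (t * (1 + t)))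
          = ennreal (1 / Gamma (1 + s) * (t powr (s - 1) / (1 + t)))"
        using True Gamma by (simp add: ennreal_mult'[symmetric])
      then show ?thesis
        using True by (simp add: nn_integral_Ioi_one_minus_exp_mult_exp)
    qed simp
  qed
  also have "\<dots> = ennreal (1 / Gamma (1 + s) * (Gamma s * Gamma (1 - s)))"
    using Gamma assms nn_integral_Ioi_powr_div_one_plus[of s]
    by (subst nn_integral_Ioi_cmult) (auto simp flip: ennreal_mult')
  also have "1 / Gamma (1 + s) * (Gamma s * Gamma (1 - s)) = Gamma (1 - s) / s"
  proof -
    have "s \<notin> \<int>\<^sub>\<le>\<^sub>0"
      using assms by (auto dest: nonpos_Ints_nonpos)
    moreover have "Gamma s > 0"
      using assms by simp
    ultimately show ?thesis
      using Gamma_plus1[of s] by (simp add: add.commute)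
  qed
  finally show ?thesis .
qed

lemma nn_integral_Ioi_one_minus_cos_div_powr:
  assumes "0 < s" "s < 1"
  shows "(\<integral>\<^sup>+w\<in>{0<..}. ennreal ((1 - cos w) / w powr (2 + s)) \<partial>lborel)
           = ennreal (Gamma (1 - s) * sin (pi * s / 2) / (s * (s + 1)))"
proof -
  have Gamma: "Gamma (2 + s) > 0"
    using assms by simp
  have "(\<integral>\<^sup>+w\<in>{0<..}. ennreal ((1 - cos w) / w powr (2 + s)) \<partial>lborel)
      = (\<integral>\<^sup>+t\<in>{0<..}. ennreal (t powr (2 + s - 1) / Gamma (2 + s))
           * (\<integral>\<^sup>+w\<in>{0<..}. ennreal ((1 - cos w) * exp (- (t * w))) \<partial>lborel) \<partial>lborel)"
    using assms by (intro nn_integral_Ioi_div_powr_Laplace) auto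
  also have "\<dots> = (\<integral>\<^sup>+t\<in>{0<..}. ennreal (1 / Gamma (2 + s) * (t powr s / (1 + t\<^sup>2))) \<partial>lborel)"
  proof (intro nn_integral_cong)
    fix t :: real
    show "ennreal (t powr (2 + s - 1) / Gamma (2 + s))
          * (\<integral>\<^sup>+w\<in>{0<..}. ennreal ((1 - cos w) * exp (- (t * w))) \<partial>lborel) * indicator {0<..} t
        = ennreal (1 / Gamma (2 + s) * (t powr s / (1 + t\<^sup>2))) * indicator {0<..} t"
    proof (cases "t > 0")
      case True
      have "t powr (2 + s - 1) = t * t powr s"
        using True by (simp add: powr_add add_ac)
      moreover have "1 + t\<^sup>2 > 0"
        by (simp add: add_pos_nonneg)
      ultimately have "ennreal (t powr (2 + s - 1) / Gamma (2 + s)) * ennreal (1 / (t * (1 + t\<^sup>2)))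
          = ennreal (1 / Gamma (2 + s) * (t powr s / (1 + t\<^sup>2)))"
        using True Gamma by (simp add: ennreal_mult'[symmetric])
      then show ?thesis
        using True by (simp add: nn_integral_Ioi_one_minus_cos_mult_exp)
    qed simp
  qed
  also have "\<dots> = ennreal (1 / Gamma (2 + s) * (Gamma ((1 + s) / 2) * Gamma ((1 - s) / 2) / 2))"
    using Gamma assms nn_integral_Ioi_powr_div_one_plus_square[of s]
    by (subst nn_integral_Ioi_cmult) (auto simp flip: ennreal_mult')
  also have "\<dots> = ennreal (Gamma (1 - s) * sin (pi * s / 2) / (s * (s + 1)))"
    using Gamma_half_reflection_div_Gamma[OF assms] by (simp add: mult.commute)
  finally show ?thesis .
qed

section \<open>The derivative of the Laplace transform\<close>

lemma abs_exp_minus_one_minus_le: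
  fixes a :: real
  shows "\<bar>exp a - 1 - a\<bar> \<le> a\<^sup>2 * exp \<bar>a\<bar>"
proof -
  have lower: "0 \<le> exp a - 1 - a"
    using exp_ge_add_one_self[of a] by linarith
  have "exp a * (1 - a) \<le> exp a * exp (- a)"
    using exp_ge_add_one_self[of "- a"] by (intro mult_left_mono) auto
  then have key: "exp a * (1 - a) \<le> 1"
    by (simp add: exp_minus)
  have "a * (exp a - 1) \<le> a\<^sup>2 * exp \<bar>a\<bar>"
  proof (cases "a \<ge> 0")
    case True
    have "exp a - 1 \<le> a * exp a"
      using key by (simp add: algebra_simps)
    then show ?thesis
      using True mult_left_mono[of "exp a - 1" "a * exp a" a] by (simp add: power2_eq_square)
  next
    case False
    have "1 - exp a \<le> - a"
      using exp_ge_add_one_self[of a] by linarith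
    then have "(- a) * (1 - exp a) \<le> (- a) * (- a)"
      by (rule mult_left_mono) (use False in simp)
    then have "a * (exp a - 1) \<le> a\<^sup>2"
      by (simp add: algebra_simps power2_eq_square)
    then show ?thesis
      using mult_left_mono[of 1 "exp \<bar>a\<bar>" "a\<^sup>2"] by simp
  qed
  moreover have "exp a - 1 - a \<le> a * (exp a - 1)"
    using key by (simp add: algebra_simps)
  ultimately show ?thesis
    using lower by simp
qed

lemma square_mult_exp_le:
  assumes "u > 0" "y \<ge> (0::real)"
  shows "y\<^sup>2 * exp (- (u * y / 2)) \<le> 16 / u\<^sup>2"
proof -
  have "u * y / 4 \<le> exp (u * y / 4)"
    using exp_ge_add_one_self[of "u * y / 4"] by linarith
  then have "(u * y / 4)\<^sup>2 \<le> (exp (u * y / 4))\<^sup>2"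
    using assms by (intro power_mono) auto
  also have "(exp (u * y / 4))\<^sup>2 = exp (u * y / 2)"
    by (simp add: power2_eq_square flip: exp_add)
  finally have "y\<^sup>2 \<le> 16 / u\<^sup>2 * exp (u * y / 2)"
    using assms by (simp add: field_simps power_mult_distrib power_divide)
  then have "y\<^sup>2 * exp (- (u * y / 2)) \<le> 16 / u\<^sup>2 * exp (u * y / 2) * exp (- (u * y / 2))"
    by (intro mult_right_mono) auto
  then show ?thesis
    by (simp add: mult.assoc flip: exp_add)
qed

lemma Laplace_kernel_remainder_le:
  assumes "u > 0" "y \<ge> (0::real)" "\<bar>h\<bar> \<le> u / 2"
  shows "\<bar>exp (- (u + h) * y) - exp (- u * y) + h * (y * exp (- u * y))\<bar> \<le> 16 / u\<^sup>2 * h\<^sup>2"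
proof -
  have "exp (- (u + h) * y) - exp (- u * y) + h * (y * exp (- u * y))
      = exp (- u * y) * (exp (- h * y) - 1 - (- h * y))"
    by (simp add: algebra_simps flip: exp_add)
  then have "\<bar>exp (- (u + h) * y) - exp (- u * y) + h * (y * exp (- u * y))\<bar>
      = exp (- u * y) * \<bar>exp (- h * y) - 1 - (- h * y)\<bar>"
    by (simp add: abs_mult)
  also have "\<dots> \<le> exp (- u * y) * ((- h * y)\<^sup>2 * exp \<bar>- h * y\<bar>)"
    by (intro mult_left_mono abs_exp_minus_one_minus_le) auto
  also have "\<dots> = h\<^sup>2 * (y\<^sup>2 * exp (\<bar>h\<bar> * y - u * y))"
    using assms by (simp add: abs_mult power_mult_distrib exp_diff exp_minus) (simp add: field_simps)
  also have "\<dots> \<le> h\<^sup>2 * (y\<^sup>2 * exp (- (u * y / 2)))"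
    using assms mult_right_mono[of "\<bar>h\<bar>" "u / 2" y] by (intro mult_left_mono) auto
  also have "\<dots> \<le> h\<^sup>2 * (16 / u\<^sup>2)"
    using square_mult_exp_le[OF assms(1,2)] by (intro mult_left_mono) auto
  finally show ?thesis
    by (simp add: mult.commute)
qed

lemma has_real_derivative_quadratic_remainder:
  fixes f :: "real \<Rightarrow> real"
  assumes "d > 0" and remainder: "\<And>h. \<bar>h\<bar> < d \<Longrightarrow> \<bar>f (x + h) - f x - h * D\<bar> \<le> K * h\<^sup>2"
  shows "(f has_real_derivative D) (at x)"
proof -
  have "\<bar>(f (x + h) - f x) / h - D\<bar> \<le> K * \<bar>h\<bar>" if "h \<noteq> 0" "\<bar>h\<bar> < d" for h
  proof -
    have "\<bar>(f (x + h) - f x) / h - D\<bar> = \<bar>f (x + h) - f x - h * D\<bar> / \<bar>h\<bar>"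
      using that by (simp add: field_simps flip: abs_divide)
    also have "\<dots> \<le> K * h\<^sup>2 / \<bar>h\<bar>"
      using remainder[OF that(2)] by (intro divide_right_mono) auto
    also have "h\<^sup>2 = \<bar>h\<bar> * \<bar>h\<bar>"
      by (simp add: power2_eq_square)
    also have "K * (\<bar>h\<bar> * \<bar>h\<bar>) / \<bar>h\<bar> = K * \<bar>h\<bar>"
      using that by (simp del: abs_mult_self_eq)
    finally show ?thesis .
  qed
  then have "\<forall>\<^sub>F h in at 0. norm ((f (x + h) - f x) / h - D) \<le> K * \<bar>h\<bar>"
    using \<open>d > 0\<close> unfolding eventually_at by (intro exI[of _ d]) (auto simp: dist_real_def)
  moreover have "((\<lambda>h. K * \<bar>h\<bar>) \<longlongrightarrow> 0) (at (0::real))"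
    by (intro tendsto_eq_intros) auto
  ultimately have "((\<lambda>h. (f (x + h) - f x) / h - D) \<longlongrightarrow> 0) (at 0)"
    by (rule Lim_null_comparison)
  then show ?thesis
    unfolding DERIV_def by (rule LIM_zero_iff[THEN iffD1])
qed

lemma (in finite_measure) Laplace_transform_has_real_derivative:
  assumes [measurable]: "X \<in> borel_measurable M" and X: "\<And>x. x \<in> space M \<Longrightarrow> X x \<ge> 0" and "u > 0"
  shows "((\<lambda>t. LINT x|M. exp (- t * X x)) has_real_derivative - (LINT x|M. X x * exp (- u * X x))) (at u)"
proof (rule has_real_derivative_quadratic_remainder[where d = "u / 2" and K = "16 / u\<^sup>2 * measure M (space M)"])
  have bounded: "integrable M f" if "f \<in> borel_measurable M" "\<And>x. x \<in> space M \<Longrightarrow> \<bar>f x\<bar> \<le> B" for f :: "'a \<Rightarrow> real" and B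
    using that by (intro integrable_const_bound[where B = B]) auto
  have exp_integrable: "integrable M (\<lambda>x. exp (- t * X x))" if "t \<ge> 0" for t
    using that X by (intro bounded[where B = 1]) auto
  have "X x * exp (- u * X x) \<le> 1 / u" if "x \<in> space M" for x
  proof -
    have "u * X x \<le> exp (u * X x)"
      using exp_ge_add_one_self[of "u * X x"] by linarith
    then have "u * X x * exp (- (u * X x)) \<le> exp (u * X x) * exp (- (u * X x))"
      by (rule mult_right_mono) simp
    then show ?thesis
      using \<open>u > 0\<close> by (simp add: field_simps flip: exp_add)
  qed
  then have moment_integrable: "integrable M (\<lambda>x. X x * exp (- u * X x))"
    using X by (intro bounded[where B = "1 / u"]) auto
  show "\<bar>(LINT x|M. exp (- (u + h) * X x)) - (LINT x|M. exp (- u * X x)) - h * - (LINT x|M. X x * exp (- u * X x))\<bar>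
      \<le> 16 / u\<^sup>2 * measure M (space M) * h\<^sup>2" if "\<bar>h\<bar> < u / 2" for h
  proof -
    let ?r = "\<lambda>x. exp (- (u + h) * X x) - exp (- u * X x) + h * (X x * exp (- u * X x))"
    have "(LINT x|M. exp (- (u + h) * X x)) - (LINT x|M. exp (- u * X x)) - h * - (LINT x|M. X x * exp (- u * X x))
        = (LINT x|M. ?r x)"
      using exp_integrable[of "u + h"] exp_integrable[of u] moment_integrable that \<open>u > 0\<close> by simp
    also have "\<bar>\<dots>\<bar> \<le> (LINT x|M. 16 / u\<^sup>2 * h\<^sup>2)"
    proof (rule integral_abs_bound[THEN order_trans], rule integral_mono)
      show "integrable M (\<lambda>x. \<bar>?r x\<bar>)"
        using exp_integrable[of "u + h"] exp_integrable[of u] moment_integrable that \<open>u > 0\<close> by auto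
      show "\<bar>?r x\<bar> \<le> 16 / u\<^sup>2 * h\<^sup>2" if "x \<in> space M" for x
        using Laplace_kernel_remainder_le[OF \<open>u > 0\<close> X[OF that]] \<open>\<bar>h\<bar> < u / 2\<close> by simp
    qed simp
    finally show ?thesis
      by (simp add: mult_ac)
  qed
qed (use \<open>u > 0\<close> in simp)

section \<open>Both criteria as multiples of the moment\<close>

lemma nn_integral_Ioi_kernel_moment:
  fixes X :: "'a \<Rightarrow> real" and f :: "real \<Rightarrow> real"
  assumes "sigma_finite_measure M" and [measurable]: "X \<in> borel_measurable M" "f \<in> borel_measurable borel"
    and X: "\<And>x. x \<in> space M \<Longrightarrow> X x \<ge> 0"
  shows "(\<integral>\<^sup>+u\<in>{0<..}. (\<integral>\<^sup>+x. ennreal (X x powr p * f (u * X x)) \<partial>M) \<partial>lborel)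
       = (\<integral>\<^sup>+v\<in>{0<..}. ennreal (f v) \<partial>lborel) * (\<integral>\<^sup>+x. ennreal (X x powr (p - 1)) \<partial>M)"
proof -
  interpret pair_sigma_finite lborel M
    using assms(1) by (simp add: pair_sigma_finite_def lborel.sigma_finite_measure_axioms)
  have "(\<integral>\<^sup>+u\<in>{0<..}. (\<integral>\<^sup>+x. ennreal (X x powr p * f (u * X x)) \<partial>M) \<partial>lborel)
      = (\<integral>\<^sup>+u. (\<integral>\<^sup>+x. ennreal (X x powr p * f (u * X x)) * indicator {0<..} u \<partial>M) \<partial>lborel)"
    by (intro nn_integral_cong) (simp add: nn_integral_multc)
  also have "\<dots> = (\<integral>\<^sup>+x. (\<integral>\<^sup>+u\<in>{0<..}. ennreal (X x powr p * f (u * X x)) \<partial>lborel) \<partial>M)"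
    by (rule Fubini'[symmetric]) measurable
  also have "\<dots> = (\<integral>\<^sup>+x. ennreal (X x powr (p - 1)) * (\<integral>\<^sup>+v\<in>{0<..}. ennreal (f v) \<partial>lborel) \<partial>M)"
  proof (intro nn_integral_cong)
    fix x assume "x \<in> space M"
    show "(\<integral>\<^sup>+u\<in>{0<..}. ennreal (X x powr p * f (u * X x)) \<partial>lborel)
        = ennreal (X x powr (p - 1)) * (\<integral>\<^sup>+v\<in>{0<..}. ennreal (f v) \<partial>lborel)"
    proof (cases "X x = 0")
      case False
      then show ?thesis
        using X[OF \<open>x \<in> space M\<close>] nn_integral_Ioi_scale_powr[of f "X x" p] by (simp add: mult.commute)
    qed simp \<comment> \<open>at \<open>X x = 0\<close> both sides vanish, because \<open>0 powr q = 0\<close>\<close>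
  qed
  also have "\<dots> = (\<integral>\<^sup>+v\<in>{0<..}. ennreal (f v) \<partial>lborel) * (\<integral>\<^sup>+x. ennreal (X x powr (p - 1)) \<partial>M)"
    by (simp add: nn_integral_multc mult.commute)
  finally show ?thesis .
qed

lemma (in finite_measure) Laplace_criterion_eq_moment:
  assumes [measurable]: "X \<in> borel_measurable M" and X: "\<And>x. x \<in> space M \<Longrightarrow> X x \<ge> 0"
    and "integrable M X" and s: "0 < s" "s < 1"
  shows "(\<integral>\<^sup>+u\<in>{0<..}. ennreal (((LINT x|M. X x) + deriv (\<lambda>t. LINT x|M. exp (- t * X x)) u) / u powr (1 + s)) \<partial>lborel)
       = ennreal (Gamma (1 - s) / s) * (\<integral>\<^sup>+x. ennreal (X x powr (1 + s)) \<partial>M)"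
proof -
  define f where "f v = (1 - exp (- v)) / v powr (1 + s)" for v
  have [measurable]: "f \<in> borel_measurable borel"
    unfolding f_def by measurable
  have "ennreal (((LINT x|M. X x) + deriv (\<lambda>t. LINT x|M. exp (- t * X x)) u) / u powr (1 + s))
      = (\<integral>\<^sup>+x. ennreal (X x powr (2 + s) * f (u * X x)) \<partial>M)" if "u > 0" for u
  proof -
    have weighted: "integrable M (\<lambda>x. X x * exp (- u * X x))"
      using X that
      by (intro Bochner_Integration.integrable_bound[OF \<open>integrable M X\<close>]) (auto intro!: AE_I2 mult_left_le)
    then have "((LINT x|M. X x) + deriv (\<lambda>t. LINT x|M. exp (- t * X x)) u) / u powr (1 + s)
        = (LINT x|M. X x * (1 - exp (- u * X x)) / u powr (1 + s))"
      using \<open>integrable M X\<close> DERIV_imp_deriv[OF Laplace_transform_has_real_derivative[OF _ X that]]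
      by (simp add: algebra_simps diff_divide_distrib)
    also have "ennreal \<dots> = (\<integral>\<^sup>+x. ennreal (X x * (1 - exp (- u * X x)) / u powr (1 + s)) \<partial>M)"
      using \<open>integrable M X\<close> weighted X that
      by (intro nn_integral_eq_integral[symmetric] integrable_divide AE_I2 divide_nonneg_nonneg mult_nonneg_nonneg)
        (auto simp: right_diff_distrib)
    also have "\<dots> = (\<integral>\<^sup>+x. ennreal (X x powr (2 + s) * f (u * X x)) \<partial>M)"
    proof (intro nn_integral_cong)
      fix x assume "x \<in> space M"
      show "ennreal (X x * (1 - exp (- u * X x)) / u powr (1 + s)) = ennreal (X x powr (2 + s) * f (u * X x))"
      proof (cases "X x = 0")
        case False
        then have "X x > 0"
          using X[OF \<open>x \<in> space M\<close>] by simp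
        then show ?thesis
          using that by (simp add: f_def powr_mult powr_add field_simps power2_eq_square)
      qed (simp add: f_def)
    qed
    finally show ?thesis .
  qed
  then have "(\<integral>\<^sup>+u\<in>{0<..}. ennreal (((LINT x|M. X x) + deriv (\<lambda>t. LINT x|M. exp (- t * X x)) u) / u powr (1 + s)) \<partial>lborel)
      = (\<integral>\<^sup>+u\<in>{0<..}. (\<integral>\<^sup>+x. ennreal (X x powr (2 + s) * f (u * X x)) \<partial>M) \<partial>lborel)"
    by (intro nn_integral_cong) (auto simp: indicator_def)
  also have "\<dots> = ennreal (Gamma (1 - s) / s) * (\<integral>\<^sup>+x. ennreal (X x powr (1 + s)) \<partial>M)"
    using s X by (subst nn_integral_Ioi_kernel_moment)
      (auto simp: f_def nn_integral_Ioi_one_minus_exp_div_powr sigma_finite_measure_axioms)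
  finally show ?thesis .
qed

lemma (in prob_space) characteristic_criterion_eq_moment:
  assumes [measurable]: "X \<in> borel_measurable M" and X: "\<And>x. x \<in> space M \<Longrightarrow> X x \<ge> 0"
    and s: "0 < s" "s < 1"
  shows "(\<integral>\<^sup>+u\<in>{0<..}. ennreal ((1 - Re (CLINT x|M. exp (\<i> * complex_of_real (u * X x)))) / u powr (2 + s)) \<partial>lborel)
       = ennreal (Gamma (1 - s) * sin (pi * s / 2) / (s * (s + 1))) * (\<integral>\<^sup>+x. ennreal (X x powr (1 + s)) \<partial>M)"
proof -
  define f where "f v = (1 - cos v) / v powr (2 + s)" for v
  have [measurable]: "f \<in> borel_measurable borel"
    unfolding f_def by measurable
  have "ennreal ((1 - Re (CLINT x|M. exp (\<i> * complex_of_real (u * X x)))) / u powr (2 + s))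
      = (\<integral>\<^sup>+x. ennreal (X x powr (2 + s) * f (u * X x)) \<partial>M)" if "u > 0" for u
  proof -
    have cos_integrable: "integrable M (\<lambda>x. cos (u * X x))"
      by (intro integrable_const_bound[where B = 1]) auto
    have "integrable M (\<lambda>x. exp (\<i> * complex_of_real (u * X x)))"
      by (intro integrable_const_bound[where B = 1]) (auto simp: norm_exp)
    then have "Re (CLINT x|M. exp (\<i> * complex_of_real (u * X x))) = (LINT x|M. cos (u * X x))"
      by (simp add: integral_Re[symmetric] Re_exp)
    then have "(1 - Re (CLINT x|M. exp (\<i> * complex_of_real (u * X x)))) / u powr (2 + s)
        = (LINT x|M. (1 - cos (u * X x)) / u powr (2 + s))"
      using cos_integrable by (simp add: prob_space diff_divide_distrib)
    also have "ennreal \<dots> = (\<integral>\<^sup>+x. ennreal ((1 - cos (u * X x)) / u powr (2 + s)) \<partial>M)"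
      using cos_integrable by (intro nn_integral_eq_integral[symmetric] AE_I2 divide_nonneg_nonneg) auto
    also have "\<dots> = (\<integral>\<^sup>+x. ennreal (X x powr (2 + s) * f (u * X x)) \<partial>M)"
    proof (intro nn_integral_cong)
      fix x assume "x \<in> space M"
      show "ennreal ((1 - cos (u * X x)) / u powr (2 + s)) = ennreal (X x powr (2 + s) * f (u * X x))"
      proof (cases "X x = 0")
        case False
        then have "X x > 0"
          using X[OF \<open>x \<in> space M\<close>] by simp
        then show ?thesis
          using that by (simp add: f_def powr_mult)
      qed (simp add: f_def)
    qed
    finally show ?thesis .
  qed
  then have "(\<integral>\<^sup>+u\<in>{0<..}. ennreal ((1 - Re (CLINT x|M. exp (\<i> * complex_of_real (u * X x)))) / u powr (2 + s)) \<partial>lborel)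
      = (\<integral>\<^sup>+u\<in>{0<..}. (\<integral>\<^sup>+x. ennreal (X x powr (2 + s) * f (u * X x)) \<partial>M) \<partial>lborel)"
    by (intro nn_integral_cong) (auto simp: indicator_def)
  also have "\<dots> = ennreal (Gamma (1 - s) * sin (pi * s / 2) / (s * (s + 1))) * (\<integral>\<^sup>+x. ennreal (X x powr (1 + s)) \<partial>M)"
    using s X by (subst nn_integral_Ioi_kernel_moment)
      (auto simp: f_def nn_integral_Ioi_one_minus_cos_div_powr sigma_finite_measure_axioms)
  finally show ?thesis .
qed

lemma (in finite_measure) integrable_if_nn_integral_powr_finite:
  assumes [measurable]: "X \<in> borel_measurable M" and X: "\<And>x. x \<in> space M \<Longrightarrow> X x \<ge> 0"
    and "p \<ge> 1" "(\<integral>\<^sup>+x. ennreal (X x powr p) \<partial>M) < \<infinity>"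
  shows "integrable M X"
proof (rule integrableI_bounded)
  have "ennreal (norm (X x)) \<le> 1 + ennreal (X x powr p)" if "x \<in> space M" for x
  proof -
    have "X x \<le> 1 + X x powr p"
    proof (cases "X x \<le> 1")
      case False
      then have "X x powr 1 \<le> X x powr p"
        using \<open>p \<ge> 1\<close> by (intro powr_mono) auto
      then show ?thesis
        using False by simp
    qed (use powr_ge_zero[of "X x" p] in linarith)
    then have "ennreal (X x) \<le> ennreal (1 + X x powr p)"
      by (rule ennreal_leI)
    then show ?thesis
      using X[OF that] by (simp add: ennreal_plus)
  qed
  then have "(\<integral>\<^sup>+x. ennreal (norm (X x)) \<partial>M) \<le> (\<integral>\<^sup>+x. 1 + ennreal (X x powr p) \<partial>M)"
    by (intro nn_integral_mono) auto
  also have "\<dots> = emeasure M (space M) + (\<integral>\<^sup>+x. ennreal (X x powr p) \<partial>M)"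
    by (subst nn_integral_add) auto
  also have "\<dots> < \<infinity>"
    using assms(4) by (simp add: less_top[symmetric])
  finally show "(\<integral>\<^sup>+x. ennreal (norm (X x)) \<partial>M) < \<infinity>" .
qed simp

lemma ennreal_mult_le_ennreal_iff:
  assumes "k > 0" "k * d = e"
  shows "ennreal k * A \<le> ennreal e \<longleftrightarrow> A \<le> ennreal d"
  using assms by (auto simp: ennreal_mult' ennreal_mult_le_mult_iff)

lemma (in finite_measure) Laplace_criterion_le_iff:
  assumes "X \<in> borel_measurable M" "\<And>x. x \<in> space M \<Longrightarrow> X x \<ge> 0" "integrable M X" "s \<in> {0<..<1}"
  shows "(\<integral>\<^sup>+u\<in>{0<..}. ennreal (((LINT x|M. X x) + deriv (\<lambda>t. LINT x|M. exp (- t * X x)) u) / u powr (1 + s)) \<partial>lborel)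
           \<le> ennreal (C * Gamma (1 - s) / (s * (1 - s)))
         \<longleftrightarrow> (\<integral>\<^sup>+x. ennreal (X x powr (1 + s)) \<partial>M) \<le> ennreal (C / (1 - s))"
  using assms by (subst Laplace_criterion_eq_moment) (auto intro!: ennreal_mult_le_ennreal_iff)

lemma (in prob_space) characteristic_criterion_le_iff:
  assumes "X \<in> borel_measurable M" "\<And>x. x \<in> space M \<Longrightarrow> X x \<ge> 0" "s \<in> {0<..<1}"
  shows "(\<integral>\<^sup>+u\<in>{0<..}. ennreal ((1 - Re (CLINT x|M. exp (\<i> * complex_of_real (u * X x)))) / u powr (2 + s)) \<partial>lborel)
           \<le> ennreal (C * sin (pi * s / 2) * Gamma (1 - s) / (s * (s + 1) * (1 - s)))
         \<longleftrightarrow> (\<integral>\<^sup>+x. ennreal (X x powr (1 + s)) \<partial>M) \<le> ennreal (C / (1 - s))"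
proof -
  have "sin (pi * s / 2) > 0"
    using assms(3) by (intro sin_gt_zero) auto
  then show ?thesis
    using assms by (subst characteristic_criterion_eq_moment) (auto intro!: ennreal_mult_le_ennreal_iff)
qed

theorem lemma2p2:
  fixes M :: "'a measure" and X :: "'a \<Rightarrow> real" and C :: real
  assumes "prob_space M"
    and "X \<in> borel_measurable M"
    and "\<forall>x\<in>space M. X x \<ge> 0"
    and "C > 0"
  defines "L \<equiv> (\<lambda>t::real. LINT x|M. exp (- t * X x))"
    and "\<phi> \<equiv> (\<lambda>t::real. CLINT x|M. exp (\<i> * complex_of_real (t * X x)))"
  shows "((\<forall>s\<in>{0<..<1::real}.
              (\<integral>\<^sup>+ x. ennreal (X x powr (1 + s)) \<partial>M) \<le> ennreal (C / (1 - s)))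
          \<longleftrightarrow>
          (integrable M X \<and>
           (\<forall>s\<in>{0<..<1::real}.
              (\<integral>\<^sup>+ u\<in>{0<..}. ennreal (((LINT x|M. X x) + deriv L u) / u powr (1 + s)) \<partial>lborel)
                \<le> ennreal (C * Gamma (1 - s) / (s * (1 - s))))))
       \<and>
         ((integrable M X \<and>
           (\<forall>s\<in>{0<..<1::real}.
              (\<integral>\<^sup>+ u\<in>{0<..}. ennreal (((LINT x|M. X x) + deriv L u) / u powr (1 + s)) \<partial>lborel)
                \<le> ennreal (C * Gamma (1 - s) / (s * (1 - s)))))
          \<longleftrightarrow>
          (\<forall>s\<in>{0<..<1::real}.
              (\<integral>\<^sup>+ u\<in>{0<..}. ennreal ((1 - Re (\<phi> u)) / u powr (2 + s)) \<partial>lborel)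
                \<le> ennreal (C * sin (pi * s / 2) * Gamma (1 - s) / (s * (s + 1) * (1 - s)))))"
proof -
  interpret prob_space M
    by (rule assms(1))
  note X = assms(2) assms(3)[rule_format]
  have "integrable M X" if "\<forall>s\<in>{0<..<1}. (\<integral>\<^sup>+x. ennreal (X x powr (1 + s)) \<partial>M) \<le> ennreal (C / (1 - s))"
  proof (rule integrable_if_nn_integral_powr_finite[OF X])
    show "(\<integral>\<^sup>+x. ennreal (X x powr (1 + 1 / 2)) \<partial>M) < \<infinity>"
      using that by (auto dest!: bspec[of _ _ "1 / 2"] simp: order_le_less_trans)
  qed simp_all
  then show ?thesis
    unfolding L_def \<phi>_def
    using Laplace_criterion_le_iff[OF X] characteristic_criterion_le_iff[OF X] by blast
qed

end
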